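(* Let $a^*\in A$ be a pure strategy profile of $G$. If for every $\bar p\in(0,1)$ there exists $p\in(0,\bar p)$ such that $a^*$ is stable for the degree of observability $p$, then $a^*$ is a Nash equilibrium of $G$.
   Context: Objective game: $G=(N,A,\pi)$ is a finite $n$-player normal-form game, $N=\{1,\dots,n\}$, finite action sets $A_i$, $A=\prod_iA_i$, fitness functions $\pi_i:A\to\mathbb{R}$ extended multilinearly to $\prod_i\Delta(A_i)$. Preference types: $\Theta=\mathbb{R}^A$ (extended multilinearly). $\mathcal{M}(\Theta^n)$: product distributions $\mu=\mu_1\times\dots\times\mu_n$ with finitely supported marginals; $\operatorname{supp}\mu=\prod_i\operatorname{supp}\mu_i$, $\mu(\theta)=\prod_i\mu_i(\theta_i)$, $\mu_{-i}(\theta_{-i})=\prod_{j\ne i}\mu_j(\theta_j)$. Mutants: for nonempty $J\subseteq N$, $\tilde\theta_J\in\prod_{j\in J}(\Theta\setminus\operatorname{supp}\mu_j)$ with shares $\varepsilon\in(0,1)^{|J|}$, $\|\varepsilon\|=\max_j\varepsilon_j$; post-entry $\tilde\mu^\varepsilon_i=(1-\varepsilon_i)\mu_i+\varepsilon_i\delta_{\tilde\theta_i}$ for $i\in J$, $\mu_i$ otherwise. Partial observability with degree $p\in(0,1)$: each player independently observes opponents' types with probability $p$ and otherwise knows only $\mu_{-i}$. Strategies: $b:\operatorname{supp}\mu\to\prod_i\Delta(A_i)$ (play when observing) and $s_i:\operatorname{supp}\mu_i\to\Delta(A_i)$ (play when not observing), $s(\theta)=(s_i(\theta_i))_i$. For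 a matched profile $\theta$ and the set $T\subseteq N$ of non-observing players, the profile played is $(s(\theta)_T,b(\theta)_{-T})$. $(b,s)$ is an equilibrium if for all $\theta\in\operatorname{supp}\mu$ and $i$: $b_i(\theta)\in\arg\max_{\sigma_i}\sum_{T\subseteq N\setminus\{i\}}p^{n-1-|T|}(1-p)^{|T|}\theta_i(\sigma_i,(s_{-i}(\theta_{-i})_T,b_{-i}(\theta)_{-T}))$ and $s_i(\theta_i)\in\arg\max_{\sigma_i}\sum_{\theta'_{-i}}\mu_{-i}(\theta'_{-i})\sum_{T\subseteq N\setminus\{i\}}p^{n-1-|T|}(1-p)^{|T|}\theta_i(\sigma_i,(s_{-i}(\theta'_{-i})_T,b_{-i}(\theta_i,\theta'_{-i})_{-T}))$; $B_p(\mu)$ is the set of these; $(\mu,b,s)$ is a configuration. Aggregate outcome: $\varphi_{\mu,b,s}(a)=\sum_{\theta}\mu(\theta)\sum_{T\subseteq N}p^{n-|T|}(1-p)^{|T|}\prod_i(s(\theta)_T,b(\theta)_{-T})_i(a_i)$. Average fitness: $\Pi_{\theta_i}(\mu;b,s)=\sum_{\theta'_{-i}}\mu_{-i}(\theta'_{-i})\sum_{T\subseteq N}p^{n-|T|}(1-p)^{|T|}\pi_i(s(\theta_i,\theta'_{-i})_T,b(\theta_i,\theta'_{-i})_{-T})$. Balanced: equal average fitness of all types within each population. Nearby set: $B_p^\eta(\tilde\mu^\varepsilon;b,s)=\{(\tilde b,\tilde s)\in B_p(\tilde\mu^\varepsilon):\max_i\|\tilde b_i(\theta)-b_i(\theta)\|\le\eta,\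 \max_i\|\tilde s_i(\theta_i)-s_i(\theta_i)\|\le\eta\ \forall\theta\in\operatorname{supp}\mu\}$. $(\mu,b,s)$ is stable (for degree $p$) if balanced and for every nonempty $J$, every $\tilde\theta_J$, every $\eta>0$, there are $\bar\eta\in[0,\eta)$, $\bar\epsilon\in(0,1)$ such that for all $\varepsilon$ with $\|\varepsilon\|\in(0,\bar\epsilon)$, $B_p^{\bar\eta}(\tilde\mu^\varepsilon;b,s)\ne\emptyset$ and each of its elements satisfies (i) some $j\in J$ has $\Pi_{\theta_j}>\Pi_{\tilde\theta_j}$ (post-entry) for all $\theta_j\in\operatorname{supp}\mu_j$, or (ii) for every $i$ all types in $\operatorname{supp}\tilde\mu^\varepsilon_i$ have equal post-entry average fitness. A pure profile $a^*$ is stable for degree $p$ if the point mass at $a^*$ is the aggregate outcome of a stable configuration for $p$. *)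

theory Defs
  imports Complex_Main "HOL-Library.FuncSet"
begin

text \<open>Players are 0, ..., n-1 (the paper's 1, ..., n).
A preference type is a real function on pure profiles (vanishing outside the
set of pure profiles, so that it is an element of R^A); it is extended
multilinearly to mixed profiles.\<close>

type_synonym 'a ptype = "(nat \<Rightarrow> 'a) \<Rightarrow> real"
type_synonym 'a mixed = "'a \<Rightarrow> real"

definition is_mixed :: "(nat \<Rightarrow> 'a set) \<Rightarrow> nat \<Rightarrow> 'a mixed \<Rightarrow> bool" where
  "is_mixed A i \<sigma> \<longleftrightarrow> (\<forall>x. 0 \<le> \<sigma> x) \<and> (\<forall>x. x \<notin> A i \<longrightarrow> \<sigma> x = 0) \<and> sum \<sigma> (A i) = 1"

definition mlin :: "nat \<Rightarrow> (nat \<Rightarrow> 'a set) \<Rightarrow> 'a ptype \<Rightarrow> (nat \<Rightarrow> 'a mixed) \<Rightarrow> real" where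
  "mlin n A u \<sigma> = (\<Sum>a\<in>PiE {..<n} A. (\<Prod>j<n. \<sigma> j (a j)) * u a)"

definition Theta :: "nat \<Rightarrow> (nat \<Rightarrow> 'a set) \<Rightarrow> 'a ptype set" where
  "Theta n A = {\<theta>. \<forall>a. a \<notin> PiE {..<n} A \<longrightarrow> \<theta> a = 0}"

definition tsupp :: "('a ptype \<Rightarrow> real) \<Rightarrow> 'a ptype set" where
  "tsupp m = {\<theta>. m \<theta> \<noteq> 0}"

definition is_tdist :: "nat \<Rightarrow> (nat \<Rightarrow> 'a set) \<Rightarrow> ('a ptype \<Rightarrow> real) \<Rightarrow> bool" where
  "is_tdist n A m \<longleftrightarrow> finite (tsupp m) \<and> tsupp m \<subseteq> Theta n A \<and> (\<forall>\<theta>. 0 \<le> m \<theta>)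
      \<and> sum m (tsupp m) = 1"

text \<open>A product distribution mu = mu_1 x ... x mu_n is given by its marginals.\<close>
definition is_popdist :: "nat \<Rightarrow> (nat \<Rightarrow> 'a set) \<Rightarrow> (nat \<Rightarrow> 'a ptype \<Rightarrow> real) \<Rightarrow> bool" where
  "is_popdist n A \<mu> \<longleftrightarrow> (\<forall>i<n. is_tdist n A (\<mu> i))"

definition tprofiles :: "nat \<Rightarrow> (nat \<Rightarrow> 'a ptype \<Rightarrow> real) \<Rightarrow> (nat \<Rightarrow> 'a ptype) set" where
  "tprofiles n \<mu> = PiE {..<n} (\<lambda>i. tsupp (\<mu> i))"

text \<open>Profile played at type profile theta when T is the set of non-observing players.\<close>
definition play ::
  "((nat \<Rightarrow> 'a ptype) \<Rightarrow> nat \<Rightarrow> 'a mixed) \<Rightarrow> (nat \<Rightarrow> 'a ptype \<Rightarrow> 'a mixed)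
     \<Rightarrow> (nat \<Rightarrow> 'a ptype) \<Rightarrow> nat set \<Rightarrow> nat \<Rightarrow> 'a mixed" where
  "play b s \<theta> T = (\<lambda>j. if j \<in> T then s j (\<theta> j) else b \<theta> j)"

definition obs_payoff ::
  "nat \<Rightarrow> (nat \<Rightarrow> 'a set) \<Rightarrow> real \<Rightarrow> ((nat \<Rightarrow> 'a ptype) \<Rightarrow> nat \<Rightarrow> 'a mixed)
     \<Rightarrow> (nat \<Rightarrow> 'a ptype \<Rightarrow> 'a mixed) \<Rightarrow> (nat \<Rightarrow> 'a ptype) \<Rightarrow> nat \<Rightarrow> 'a mixed \<Rightarrow> real" where
  "obs_payoff n A p b s \<theta> i \<sigma> =
     (\<Sum>T\<in>Pow ({..<n} - {i}). p ^ (n - 1 - card T) * (1 - p) ^ card T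
        * mlin n A (\<theta> i) ((play b s \<theta> T)(i := \<sigma>)))"

definition unobs_payoff ::
  "nat \<Rightarrow> (nat \<Rightarrow> 'a set) \<Rightarrow> real \<Rightarrow> (nat \<Rightarrow> 'a ptype \<Rightarrow> real) \<Rightarrow> ((nat \<Rightarrow> 'a ptype) \<Rightarrow> nat \<Rightarrow> 'a mixed)
     \<Rightarrow> (nat \<Rightarrow> 'a ptype \<Rightarrow> 'a mixed) \<Rightarrow> nat \<Rightarrow> 'a ptype \<Rightarrow> 'a mixed \<Rightarrow> real" where
  "unobs_payoff n A p \<mu> b s i thi \<sigma> =
     (\<Sum>\<theta>'\<in>PiE ({..<n} - {i}) (\<lambda>j. tsupp (\<mu> j)).
        (\<Prod>j\<in>{..<n} - {i}. \<mu> j (\<theta>' j)) * obs_payoff n A p b s (\<theta>'(i := thi)) i \<sigma>)"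

definition is_equilibrium ::
  "nat \<Rightarrow> (nat \<Rightarrow> 'a set) \<Rightarrow> real \<Rightarrow> (nat \<Rightarrow> 'a ptype \<Rightarrow> real) \<Rightarrow> ((nat \<Rightarrow> 'a ptype) \<Rightarrow> nat \<Rightarrow> 'a mixed)
     \<Rightarrow> (nat \<Rightarrow> 'a ptype \<Rightarrow> 'a mixed) \<Rightarrow> bool" where
  "is_equilibrium n A p \<mu> b s \<longleftrightarrow>
     (\<forall>\<theta>\<in>tprofiles n \<mu>. \<forall>i<n. is_mixed A i (b \<theta> i) \<and>
        (\<forall>\<sigma>. is_mixed A i \<sigma> \<longrightarrow> obs_payoff n A p b s \<theta> i \<sigma> \<le> obs_payoff n A p b s \<theta> i (b \<theta> i))) \<and>
     (\<forall>i<n. \<forall>thi\<in>tsupp (\<mu> i). is_mixed A i (s i thi) \<and>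
        (\<forall>\<sigma>. is_mixed A i \<sigma> \<longrightarrow> unobs_payoff n A p \<mu> b s i thi \<sigma> \<le> unobs_payoff n A p \<mu> b s i thi (s i thi)))"

definition outcome ::
  "nat \<Rightarrow> real \<Rightarrow> (nat \<Rightarrow> 'a ptype \<Rightarrow> real) \<Rightarrow> ((nat \<Rightarrow> 'a ptype) \<Rightarrow> nat \<Rightarrow> 'a mixed)
     \<Rightarrow> (nat \<Rightarrow> 'a ptype \<Rightarrow> 'a mixed) \<Rightarrow> (nat \<Rightarrow> 'a) \<Rightarrow> real" where
  "outcome n p \<mu> b s a =
     (\<Sum>\<theta>\<in>tprofiles n \<mu>. (\<Prod>i<n. \<mu> i (\<theta> i)) *
        (\<Sum>T\<in>Pow {..<n}. p ^ (n - card T) * (1 - p) ^ card T * (\<Prod>i<n. play b s \<theta> T i (a i))))"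

definition avg_fit ::
  "nat \<Rightarrow> (nat \<Rightarrow> 'a set) \<Rightarrow> (nat \<Rightarrow> (nat \<Rightarrow> 'a) \<Rightarrow> real) \<Rightarrow> real \<Rightarrow> (nat \<Rightarrow> 'a ptype \<Rightarrow> real)
     \<Rightarrow> ((nat \<Rightarrow> 'a ptype) \<Rightarrow> nat \<Rightarrow> 'a mixed) \<Rightarrow> (nat \<Rightarrow> 'a ptype \<Rightarrow> 'a mixed) \<Rightarrow> nat \<Rightarrow> 'a ptype \<Rightarrow> real" where
  "avg_fit n A \<pi> p \<mu> b s i thi =
     (\<Sum>\<theta>'\<in>PiE ({..<n} - {i}) (\<lambda>j. tsupp (\<mu> j)).
        (\<Prod>j\<in>{..<n} - {i}. \<mu> j (\<theta>' j)) *
        (\<Sum>T\<in>Pow {..<n}. p ^ (n - card T) * (1 - p) ^ card T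
            * mlin n A (\<pi> i) (play b s (\<theta>'(i := thi)) T)))"

definition balanced ::
  "nat \<Rightarrow> (nat \<Rightarrow> 'a set) \<Rightarrow> (nat \<Rightarrow> (nat \<Rightarrow> 'a) \<Rightarrow> real) \<Rightarrow> real \<Rightarrow> (nat \<Rightarrow> 'a ptype \<Rightarrow> real)
     \<Rightarrow> ((nat \<Rightarrow> 'a ptype) \<Rightarrow> nat \<Rightarrow> 'a mixed) \<Rightarrow> (nat \<Rightarrow> 'a ptype \<Rightarrow> 'a mixed) \<Rightarrow> bool" where
  "balanced n A \<pi> p \<mu> b s \<longleftrightarrow>
     (\<forall>i<n. \<forall>t1\<in>tsupp (\<mu> i). \<forall>t2\<in>tsupp (\<mu> i).
        avg_fit n A \<pi> p \<mu> b s i t1 = avg_fit n A \<pi> p \<mu> b s i t2)"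

definition post_entry ::
  "(nat \<Rightarrow> 'a ptype \<Rightarrow> real) \<Rightarrow> nat set \<Rightarrow> (nat \<Rightarrow> 'a ptype) \<Rightarrow> (nat \<Rightarrow> real) \<Rightarrow> nat \<Rightarrow> 'a ptype \<Rightarrow> real" where
  "post_entry \<mu> J thm eps = (\<lambda>i. if i \<in> J
       then (\<lambda>\<theta>. (1 - eps i) * \<mu> i \<theta> + eps i * (if \<theta> = thm i then 1 else 0))
       else \<mu> i)"

definition mdist :: "(nat \<Rightarrow> 'a set) \<Rightarrow> nat \<Rightarrow> 'a mixed \<Rightarrow> 'a mixed \<Rightarrow> real" where
  "mdist A i \<sigma> \<tau> = Max ((\<lambda>x. \<bar>\<sigma> x - \<tau> x\<bar>) ` A i)"

definition nearby ::
  "nat \<Rightarrow> (nat \<Rightarrow> 'a set) \<Rightarrow> real \<Rightarrow> (nat \<Rightarrow> 'a ptype \<Rightarrow> real) \<Rightarrow> (nat \<Rightarrow> 'a ptype \<Rightarrow> real) \<Rightarrow> real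
     \<Rightarrow> ((nat \<Rightarrow> 'a ptype) \<Rightarrow> nat \<Rightarrow> 'a mixed) \<Rightarrow> (nat \<Rightarrow> 'a ptype \<Rightarrow> 'a mixed)
     \<Rightarrow> (((nat \<Rightarrow> 'a ptype) \<Rightarrow> nat \<Rightarrow> 'a mixed) \<times> (nat \<Rightarrow> 'a ptype \<Rightarrow> 'a mixed)) set" where
  "nearby n A p \<mu> \<mu>' \<eta> b s = {(b', s'). is_equilibrium n A p \<mu>' b' s' \<and>
      (\<forall>\<theta>\<in>tprofiles n \<mu>. \<forall>i<n. mdist A i (b' \<theta> i) (b \<theta> i) \<le> \<eta>
                               \<and> mdist A i (s' i (\<theta> i)) (s i (\<theta> i)) \<le> \<eta>)}"

definition stable ::
  "nat \<Rightarrow> (nat \<Rightarrow> 'a set) \<Rightarrow> (nat \<Rightarrow> (nat \<Rightarrow> 'a) \<Rightarrow> real) \<Rightarrow> real \<Rightarrow> (nat \<Rightarrow> 'a ptype \<Rightarrow> real)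
     \<Rightarrow> ((nat \<Rightarrow> 'a ptype) \<Rightarrow> nat \<Rightarrow> 'a mixed) \<Rightarrow> (nat \<Rightarrow> 'a ptype \<Rightarrow> 'a mixed) \<Rightarrow> bool" where
  "stable n A \<pi> p \<mu> b s \<longleftrightarrow> balanced n A \<pi> p \<mu> b s \<and>
     (\<forall>J thm. J \<subseteq> {..<n} \<and> J \<noteq> {} \<and> (\<forall>j\<in>J. thm j \<in> Theta n A \<and> thm j \<notin> tsupp (\<mu> j)) \<longrightarrow>
       (\<forall>\<eta>>0. \<exists>\<eta>' \<epsilon>'. 0 \<le> \<eta>' \<and> \<eta>' < \<eta> \<and> 0 < \<epsilon>' \<and> \<epsilon>' < 1 \<and>
          (\<forall>eps. (\<forall>j\<in>J. 0 < eps j \<and> eps j < 1) \<and> Max (eps ` J) < \<epsilon>' \<longrightarrow>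
             (let \<mu>' = post_entry \<mu> J thm eps in
               nearby n A p \<mu> \<mu>' \<eta>' b s \<noteq> {} \<and>
               (\<forall>(b', s')\<in>nearby n A p \<mu> \<mu>' \<eta>' b s.
                  (\<exists>j\<in>J. \<forall>tj\<in>tsupp (\<mu> j).
                      avg_fit n A \<pi> p \<mu>' b' s' j tj > avg_fit n A \<pi> p \<mu>' b' s' j (thm j)) \<or>
                  (\<forall>i<n. \<forall>t1\<in>tsupp (\<mu>' i). \<forall>t2\<in>tsupp (\<mu>' i).
                      avg_fit n A \<pi> p \<mu>' b' s' i t1 = avg_fit n A \<pi> p \<mu>' b' s' i t2))))))"

definition stable_profile ::
  "nat \<Rightarrow> (nat \<Rightarrow> 'a set) \<Rightarrow> (nat \<Rightarrow> (nat \<Rightarrow> 'a) \<Rightarrow> real) \<Rightarrow> real \<Rightarrow> (nat \<Rightarrow> 'a) \<Rightarrow> bool" where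
  "stable_profile n A \<pi> p a \<longleftrightarrow>
     (\<exists>\<mu> b s. is_popdist n A \<mu> \<and> is_equilibrium n A p \<mu> b s \<and> stable n A \<pi> p \<mu> b s \<and>
        (\<forall>a'\<in>PiE {..<n} A. outcome n p \<mu> b s a' = (if a' = a then 1 else 0)))"

definition nash :: "nat \<Rightarrow> (nat \<Rightarrow> 'a set) \<Rightarrow> (nat \<Rightarrow> (nat \<Rightarrow> 'a) \<Rightarrow> real) \<Rightarrow> (nat \<Rightarrow> 'a) \<Rightarrow> bool" where
  "nash n A \<pi> a \<longleftrightarrow> a \<in> PiE {..<n} A \<and> (\<forall>i<n. \<forall>x\<in>A i. \<pi> i (a(i := x)) \<le> \<pi> i a)"

end

theory Submission
  imports Defs
begin

text \<open>Suppose player i gains g > 0 by deviating from a* to x. In a stable configuration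
whose aggregate outcome is the point mass at a*, every incumbent plays a* purely, observing
or not, since that outcome is an average with positive weights of products of probabilities.
Let a mutant type enter population i for which x is strictly dominant. In a nearby
post-entry equilibrium the incumbents still play a* up to eta, so an incumbent of population i
earns at most pi_i(a*) + O(eta). The mutant always plays x, and its opponents can react to it only
when one of them observes it, which has probability O(p); otherwise they play a*_{-i} up to eta,
so the mutant earns at least pi_i(x, a*_{-i}) - O(eta) - O(p). Stability forbids the mutant to
earn more than the incumbents, so g = O(p) for every degree p at which a* is stable, and
letting p tend to 0 gives g <= 0.\<close>

section \<open>Weighted averages\<close>

lemma sum_binomial_weights:
  fixes p :: real
  assumes "finite S"
  shows "(\<Sum>T\<in>Pow S. p ^ (card S - card T) * (1 - p) ^ card T) = 1"
proof -
  have "(\<Sum>T\<in>Pow S. p ^ (card S - card T) * (1 - p) ^ card T)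
      = (\<Sum>T\<in>Pow S. (\<Prod>x\<in>T. 1 - p) * (\<Prod>x\<in>S - T. p))"
    using assms by (intro sum.cong) (auto simp: card_Diff_subset finite_subset)
  also have "\<dots> = (\<Prod>x\<in>S. (1 - p) + p)"
    by (rule prod_add[OF assms, symmetric])
  finally show ?thesis by simp
qed

lemma sum_PiE_prod_eq_1:
  fixes f :: "'i \<Rightarrow> 'b \<Rightarrow> real"
  assumes "finite S" "\<And>j. j \<in> S \<Longrightarrow> finite (B j)" "\<And>j. j \<in> S \<Longrightarrow> sum (f j) (B j) = 1"
  shows "(\<Sum>g\<in>PiE S B. \<Prod>j\<in>S. f j (g j)) = 1"
proof -
  have "(\<Sum>g\<in>PiE S B. \<Prod>j\<in>S. f j (g j)) = (\<Prod>j\<in>S. sum (f j) (B j))"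
    using prod_sum_PiE[of S B f] assms(1,2) by simp
  also have "\<dots> = 1" using assms(3) by simp
  finally show ?thesis .
qed

lemma weighted_sum_le:
  fixes w f :: "'b \<Rightarrow> real"
  assumes "\<And>k. k \<in> S \<Longrightarrow> 0 \<le> w k" "sum w S = 1" "\<And>k. k \<in> S \<Longrightarrow> f k \<le> U"
  shows "(\<Sum>k\<in>S. w k * f k) \<le> U"
proof -
  have "(\<Sum>k\<in>S. w k * f k) \<le> (\<Sum>k\<in>S. w k * U)"
    using assms by (intro sum_mono mult_left_mono) auto
  also have "\<dots> = U" using assms(2) by (simp add: sum_distrib_right[symmetric])
  finally show ?thesis .
qed

lemma weighted_sum_ge:
  fixes w f :: "'b \<Rightarrow> real"
  assumes "\<And>k. k \<in> S \<Longrightarrow> 0 \<le> w k" "sum w S = 1" "\<And>k. k \<in> S \<Longrightarrow> L \<le> f k"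
  shows "L \<le> (\<Sum>k\<in>S. w k * f k)"
proof -
  have "(\<Sum>k\<in>S. w k * - f k) \<le> - L"
    by (rule weighted_sum_le) (use assms in auto)
  then show ?thesis by (simp add: sum_negf)
qed

lemma weighted_sum_eq_1_imp_eq_1:
  fixes w f :: "'b \<Rightarrow> real"
  assumes "finite S" "\<And>k. k \<in> S \<Longrightarrow> 0 \<le> w k" "\<And>k. k \<in> S \<Longrightarrow> f k \<le> 1"
    and "sum w S = 1" "(\<Sum>k\<in>S. w k * f k) = 1" "k \<in> S" "0 < w k"
  shows "f k = 1"
proof -
  have "(\<Sum>k\<in>S. w k * (1 - f k)) = 0"
    using assms(4,5) by (simp add: algebra_simps sum_subtractf)
  moreover have "\<forall>k\<in>S. 0 \<le> w k * (1 - f k)" using assms(2,3) by simp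
  ultimately have "w k * (1 - f k) = 0"
    using assms(1,6) by (simp add: sum_nonneg_eq_0_iff)
  then show ?thesis using assms(7) by simp
qed

lemma prod_eq_1_imp_eq_1:
  fixes f :: "'b \<Rightarrow> real"
  assumes "finite S" "\<And>j. j \<in> S \<Longrightarrow> 0 \<le> f j \<and> f j \<le> 1" "prod f S = 1" "k \<in> S"
  shows "f k = 1"
proof -
  have "prod f S = f k * prod f (S - {k})" using assms(1,4) by (simp add: prod.remove)
  moreover have "prod f (S - {k}) \<le> 1"
    using assms(2) by (auto intro: prod_le_1)
  ultimately have "1 \<le> f k" using assms(2-4) by (metis mult_left_le)
  then show ?thesis using assms(2,4) by force
qed

lemma sum_binomial_weights_nonfull_le:
  fixes p :: real
  assumes "0 \<le> p" "p \<le> 1" and nonfull: "\<And>T. T \<subseteq> {..<n} \<Longrightarrow> B T \<Longrightarrow> T \<noteq> {..<n}"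
  shows "(\<Sum>T\<in>Pow {..<n}. p ^ (n - card T) * (1 - p) ^ card T * (if B T then 1 else 0)) \<le> 2 ^ n * p"
proof -
  have "p ^ (n - card T) * (1 - p) ^ card T * (if B T then 1 else 0) \<le> p" if "T \<subseteq> {..<n}" for T
  proof (cases "B T")
    case True
    then have "T \<subset> {..<n}" using nonfull that by auto
    then have "card T < n" using psubset_card_mono[of "{..<n}" T] by simp
    then have "p ^ (n - card T) \<le> p" using assms(1,2) power_decreasing[of 1 "n - card T" p] by simp
    moreover have "(1 - p) ^ card T \<le> 1" using assms(1,2) by (simp add: power_le_one)
    ultimately have "p ^ (n - card T) * (1 - p) ^ card T \<le> p * 1"
      using assms(1,2) by (intro mult_mono) auto
    then show ?thesis using True by simp
  qed (use assms in simp)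
  then have "(\<Sum>T\<in>Pow {..<n}. p ^ (n - card T) * (1 - p) ^ card T * (if B T then 1 else 0))
      \<le> (\<Sum>T\<in>Pow {..<n}. p)"
    by (intro sum_mono) auto
  also have "\<dots> = 2 ^ n * p" by (simp add: card_Pow)
  finally show ?thesis .
qed

lemma le_if_le_plus_small_multiple:
  fixes x y C :: real
  assumes "0 \<le> C" and small: "\<And>\<delta>. 0 < \<delta> \<Longrightarrow> \<exists>t. 0 < t \<and> t < \<delta> \<and> x \<le> y + C * t"
  shows "x \<le> y"
proof (rule field_le_epsilon)
  fix e :: real assume "0 < e"
  then obtain t where "0 < t" "t < e / (C + 1)" "x \<le> y + C * t"
    using small[of "e / (C + 1)"] \<open>0 \<le> C\<close> by auto
  moreover have "C * t \<le> e"
  proof -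
    have "(C + 1) * t < e" using \<open>t < e / (C + 1)\<close> \<open>0 \<le> C\<close> by (simp add: less_divide_eq mult.commute)
    then show ?thesis using \<open>0 < t\<close> by (simp add: algebra_simps)
  qed
  ultimately show "x \<le> y + e" by linarith
qed

section \<open>Multilinear payoffs\<close>

lemma is_mixed_le_1:
  assumes "is_mixed A j \<sigma>" "finite (A j)"
  shows "\<sigma> y \<le> 1"
proof (cases "y \<in> A j")
  case True
  then have "\<sigma> y \<le> sum \<sigma> (A j)"
    using assms by (intro member_le_sum) (auto simp: is_mixed_def)
  then show ?thesis using assms by (simp add: is_mixed_def)
qed (use assms in \<open>simp add: is_mixed_def\<close>)

lemma sum_PiE_mixed_eq_1:
  assumes "\<And>j. j < n \<Longrightarrow> finite (A j)" "\<And>j. j < n \<Longrightarrow> is_mixed A j (\<sigma> j)"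
  shows "(\<Sum>a'\<in>PiE {..<n} A. \<Prod>j<n. \<sigma> j (a' j)) = 1"
  using assms by (intro sum_PiE_prod_eq_1) (auto simp: is_mixed_def)

lemma weighted_sum_dist_le:
  fixes P u :: "'b \<Rightarrow> real"
  assumes "finite S" "a \<in> S" "\<And>k. k \<in> S \<Longrightarrow> 0 \<le> P k" "sum P S = 1"
    and bound: "\<And>k. k \<in> S \<Longrightarrow> \<bar>u k\<bar> \<le> M"
  shows "\<bar>(\<Sum>k\<in>S. P k * u k) - u a\<bar> \<le> 2 * M * (1 - P a)"
proof -
  have "(\<Sum>k\<in>S. P k * u k) - u a = (\<Sum>k\<in>S. P k * u k) - (\<Sum>k\<in>S. P k) * u a"
    using assms(4) by simp
  also have "\<dots> = (\<Sum>k\<in>S. P k * (u k - u a))"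
    by (simp add: sum_distrib_right right_diff_distrib sum_subtractf)
  also have "\<dots> = (\<Sum>k\<in>S - {a}. P k * (u k - u a))"
    using assms(1,2) by (simp add: sum.remove)
  finally have "\<bar>(\<Sum>k\<in>S. P k * u k) - u a\<bar> \<le> (\<Sum>k\<in>S - {a}. \<bar>P k * (u k - u a)\<bar>)"
    by (simp add: sum_abs)
  also have "\<dots> \<le> (\<Sum>k\<in>S - {a}. P k * (2 * M))"
  proof (rule sum_mono)
    fix k assume "k \<in> S - {a}"
    then have "\<bar>u k - u a\<bar> \<le> 2 * M" using bound[of k] bound[OF assms(2)] by auto
    then show "\<bar>P k * (u k - u a)\<bar> \<le> P k * (2 * M)"
      using assms(3) \<open>k \<in> S - {a}\<close> by (simp add: abs_mult mult_left_mono)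
  qed
  also have "\<dots> = 2 * M * (1 - P a)"
    using assms(1,2,4) by (simp add: sum_distrib_right[symmetric] sum.remove)
  finally show ?thesis .
qed

lemma mlin_near_pure:
  assumes fin: "\<And>j. j < n \<Longrightarrow> finite (A j)" and mixed: "\<And>j. j < n \<Longrightarrow> is_mixed A j (\<sigma> j)"
    and a: "a \<in> PiE {..<n} A" and bound: "\<And>a'. a' \<in> PiE {..<n} A \<Longrightarrow> \<bar>u a'\<bar> \<le> M"
    and near: "\<And>j. j < n \<Longrightarrow> 1 - \<eta> \<le> \<sigma> j (a j)"
  shows "\<bar>mlin n A u \<sigma> - u a\<bar> \<le> 2 * M * (real n * \<eta>)"
proof -
  define P where "P = (\<lambda>a'. \<Prod>j<n. \<sigma> j (a' j))"
  have "\<bar>mlin n A u \<sigma> - u a\<bar> \<le> 2 * M * (1 - P a)"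
    unfolding mlin_def P_def
  proof (rule weighted_sum_dist_le[OF _ a _ _ bound])
    show "finite (PiE {..<n} A)" using fin by (intro finite_PiE) auto
    show "0 \<le> (\<Prod>j<n. \<sigma> j (a' j))" for a'
      using mixed by (intro prod_nonneg) (auto simp: is_mixed_def)
  qed (rule sum_PiE_mixed_eq_1[OF fin mixed])
  also have "\<dots> \<le> 2 * M * (real n * \<eta>)"
  proof (rule mult_left_mono)
    have bounded: "0 \<le> \<sigma> j (a j) \<and> \<sigma> j (a j) \<le> 1" if "j < n" for j
      using mixed[OF that] is_mixed_le_1[OF mixed[OF that] fin[OF that]] by (simp add: is_mixed_def)
    have "\<bar>P a - (\<Prod>j<n. 1)\<bar> \<le> (\<Sum>j<n. \<bar>\<sigma> j (a j) - 1\<bar>)"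
      unfolding P_def using bounded norm_prod_diff[of "{..<n}" "\<lambda>j. \<sigma> j (a j)" "\<lambda>_. 1"] by simp
    also have "\<dots> \<le> (\<Sum>j<n. \<eta>)"
    proof (rule sum_mono)
      fix j assume "j \<in> {..<n}"
      then show "\<bar>\<sigma> j (a j) - 1\<bar> \<le> \<eta>" using bounded[of j] near[of j] by simp
    qed
    finally show "1 - P a \<le> real n * \<eta>" by simp
    show "0 \<le> 2 * M" using bound[OF a] by simp
  qed
  finally show ?thesis .
qed

lemma mlin_abs_le:
  assumes "\<And>j. j < n \<Longrightarrow> finite (A j)" "\<And>j. j < n \<Longrightarrow> is_mixed A j (\<sigma> j)"
    and "\<And>a'. a' \<in> PiE {..<n} A \<Longrightarrow> \<bar>u a'\<bar> \<le> M"
  shows "\<bar>mlin n A u \<sigma>\<bar> \<le> M"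
proof -
  have weights: "\<And>a'. 0 \<le> (\<Prod>j<n. \<sigma> j (a' j))" "(\<Sum>a'\<in>PiE {..<n} A. \<Prod>j<n. \<sigma> j (a' j)) = 1"
    using assms(2) sum_PiE_mixed_eq_1[OF assms(1,2)] by (auto intro: prod_nonneg simp: is_mixed_def)
  have bounds: "- M \<le> u a' \<and> u a' \<le> M" if "a' \<in> PiE {..<n} A" for a'
    using assms(3)[OF that] by linarith
  have "mlin n A u \<sigma> \<le> M" "- M \<le> mlin n A u \<sigma>"
    unfolding mlin_def using weights bounds by (auto intro!: weighted_sum_le weighted_sum_ge)
  then show ?thesis by simp
qed

section \<open>Equilibria and a mutant with a dominant action\<close>

lemma play_mixed:
  assumes "is_equilibrium n A p \<mu> b s" "\<theta> \<in> tprofiles n \<mu>" "j < n"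
  shows "is_mixed A j (play b s \<theta> T j)"
proof -
  have "\<theta> j \<in> tsupp (\<mu> j)" using assms(2,3) by (auto simp: tprofiles_def PiE_iff)
  then show ?thesis using assms unfolding is_equilibrium_def play_def by auto
qed

lemma fun_upd_in_tprofiles:
  assumes "\<theta>' \<in> PiE ({..<n} - {i}) (\<lambda>j. tsupp (\<mu> j))" "i < n" "t \<in> tsupp (\<mu> i)"
  shows "\<theta>'(i := t) \<in> tprofiles n \<mu>"
  using assms by (auto simp: tprofiles_def PiE_iff extensional_def)

lemma opponent_weights:
  assumes "\<And>j. j < n \<Longrightarrow> j \<noteq> i \<Longrightarrow> is_tdist n A (\<mu> j)"
  shows "(\<Sum>\<theta>'\<in>PiE ({..<n} - {i}) (\<lambda>j. tsupp (\<mu> j)). \<Prod>j\<in>{..<n} - {i}. \<mu> j (\<theta>' j)) = 1"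
    and "0 \<le> (\<Prod>j\<in>{..<n} - {i}. \<mu> j (\<theta>' j))"
  using assms by (auto intro!: sum_PiE_prod_eq_1 prod_nonneg simp: is_tdist_def)

lemma tsupp_nonempty:
  assumes "is_popdist n A \<mu>" "i < n"
  shows "tsupp (\<mu> i) \<noteq> {}"
  using assms by (auto simp: is_popdist_def is_tdist_def)

definition dominant_type :: "nat \<Rightarrow> (nat \<Rightarrow> 'a set) \<Rightarrow> nat \<Rightarrow> 'a \<Rightarrow> real \<Rightarrow> 'a ptype" where
  "dominant_type n A i x c = (\<lambda>a'. if a' \<in> PiE {..<n} A \<and> a' i = x then c else 0)"

lemma dominant_type_in_Theta: "dominant_type n A i x c \<in> Theta n A"
  by (simp add: dominant_type_def Theta_def)

lemma ex_fresh_dominant_type: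
  assumes "finite F" "a \<in> PiE {..<n} A" "i < n" "x \<in> A i"
  obtains c where "0 < c" "dominant_type n A i x c \<notin> F"
proof -
  have "a(i := x) \<in> PiE {..<n} A" using assms(2-4) by (auto simp: PiE_iff extensional_def)
  then have "inj (\<lambda>k::nat. dominant_type n A i x (real (Suc k)))"
    by (intro injI) (drule fun_cong[of _ _ "a(i := x)"], simp add: dominant_type_def)
  then have "finite ((\<lambda>k::nat. dominant_type n A i x (real (Suc k))) -` F)"
    using assms(1) by (intro finite_vimageI)
  then obtain k where "dominant_type n A i x (real (Suc k)) \<notin> F"
    using ex_new_if_finite[OF infinite_UNIV_nat] by blast
  then show ?thesis using that[of "real (Suc k)"] by simp
qed

lemma mlin_dominant_type:
  assumes fin: "\<And>j. j < n \<Longrightarrow> finite (A j)"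
    and mixed: "\<And>j. j < n \<Longrightarrow> j \<noteq> i \<Longrightarrow> is_mixed A j (\<tau> j)"
    and "i < n" "x \<in> A i"
  shows "mlin n A (dominant_type n A i x c) \<tau> = c * \<tau> i x"
proof -
  define \<tau>' where "\<tau>' = \<tau>(i := (\<lambda>y. if y = x then \<tau> i y else 0))"
  have "(\<Prod>j<n. \<tau> j (a' j)) * dominant_type n A i x c a' = c * (\<Prod>j<n. \<tau>' j (a' j))"
    if "a' \<in> PiE {..<n} A" for a'
  proof -
    have "(\<Prod>j<n. \<tau>' j (a' j)) = \<tau>' i (a' i) * (\<Prod>j\<in>{..<n} - {i}. \<tau> j (a' j))"
      using \<open>i < n\<close> by (simp add: prod.remove \<tau>'_def)
    also have "\<dots> = (if a' i = x then \<Prod>j<n. \<tau> j (a' j) else 0)"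
      using \<open>i < n\<close> by (simp add: prod.remove \<tau>'_def)
    finally show ?thesis using that by (simp add: dominant_type_def)
  qed
  then have "mlin n A (dominant_type n A i x c) \<tau> = c * (\<Prod>j<n. \<Sum>y\<in>A j. \<tau>' j y)"
    using prod_sum_PiE[of "{..<n}" A \<tau>'] fin by (simp add: mlin_def sum_distrib_left)
  also have "(\<Prod>j<n. \<Sum>y\<in>A j. \<tau>' j y) = (\<Sum>y\<in>A i. \<tau>' i y) * (\<Prod>j\<in>{..<n} - {i}. \<Sum>y\<in>A j. \<tau> j y)"
    using \<open>i < n\<close> by (simp add: prod.remove \<tau>'_def)
  also have "\<dots> = \<tau> i x"
    using fin[OF \<open>i < n\<close>] \<open>x \<in> A i\<close> mixed by (simp add: \<tau>'_def sum.delta is_mixed_def)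
  finally show ?thesis .
qed

context
  fixes n :: nat and A :: "nat \<Rightarrow> 'a set" and p c :: real and \<mu> b s i x
  assumes fin: "\<And>j. j < n \<Longrightarrow> finite (A j)" and eq: "is_equilibrium n A p \<mu> b s"
    and i: "i < n" and x: "x \<in> A i"
begin

lemma obs_payoff_dominant_type:
  assumes "\<theta> \<in> tprofiles n \<mu>" "\<theta> i = dominant_type n A i x c"
  shows "obs_payoff n A p b s \<theta> i \<sigma> = c * \<sigma> x"
proof -
  have "mlin n A (\<theta> i) ((play b s \<theta> T)(i := \<sigma>)) = c * \<sigma> x" for T
    using assms play_mixed[OF eq assms(1)] by (simp add: mlin_dominant_type fin i x)
  moreover have "card ({..<n} - {i}) = n - 1" using i by simp
  ultimately show ?thesis
    using sum_binomial_weights[of "{..<n} - {i}" p]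
    by (simp add: obs_payoff_def sum_distrib_right[symmetric])
qed

lemma unobs_payoff_dominant_type:
  assumes "\<And>j. j < n \<Longrightarrow> j \<noteq> i \<Longrightarrow> is_tdist n A (\<mu> j)"
    and "dominant_type n A i x c \<in> tsupp (\<mu> i)"
  shows "unobs_payoff n A p \<mu> b s i (dominant_type n A i x c) \<sigma> = c * \<sigma> x"
proof -
  have "unobs_payoff n A p \<mu> b s i (dominant_type n A i x c) \<sigma>
      = (\<Sum>\<theta>'\<in>PiE ({..<n} - {i}) (\<lambda>j. tsupp (\<mu> j)). (\<Prod>j\<in>{..<n} - {i}. \<mu> j (\<theta>' j)) * (c * \<sigma> x))"
    unfolding unobs_payoff_def
    by (intro sum.cong refl arg_cong2[where f = "(*)"] obs_payoff_dominant_type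
        fun_upd_in_tprofiles i assms(2)) auto
  then show ?thesis
    using opponent_weights(1)[OF assms(1)] by (simp add: sum_distrib_right[symmetric])
qed

lemma equilibrium_dominant_type_plays_x:
  assumes "\<And>j. j < n \<Longrightarrow> j \<noteq> i \<Longrightarrow> is_tdist n A (\<mu> j)"
    and supp: "dominant_type n A i x c \<in> tsupp (\<mu> i)" and "0 < c"
  shows "\<forall>\<theta>\<in>tprofiles n \<mu>. \<theta> i = dominant_type n A i x c \<longrightarrow> b \<theta> i x = 1"
    and "s i (dominant_type n A i x c) x = 1"
proof -
  define \<delta> where "\<delta> = (\<lambda>y. if y = x then 1 else 0 :: real)"
  have \<delta>: "is_mixed A i \<delta>" "\<delta> x = 1"
    using x fin[OF i] by (auto simp: is_mixed_def \<delta>_def sum.delta)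
  show "\<forall>\<theta>\<in>tprofiles n \<mu>. \<theta> i = dominant_type n A i x c \<longrightarrow> b \<theta> i x = 1"
  proof (intro ballI impI)
    fix \<theta> assume \<theta>: "\<theta> \<in> tprofiles n \<mu>" "\<theta> i = dominant_type n A i x c"
    have mixed: "is_mixed A i (b \<theta> i)"
      and "obs_payoff n A p b s \<theta> i \<delta> \<le> obs_payoff n A p b s \<theta> i (b \<theta> i)"
      using eq \<theta>(1) i \<delta>(1) unfolding is_equilibrium_def by blast+
    then have "c * 1 \<le> c * b \<theta> i x" using obs_payoff_dominant_type[OF \<theta>] \<delta>(2) by simp
    then show "b \<theta> i x = 1"
      using \<open>0 < c\<close> is_mixed_le_1[OF mixed fin[OF i], of x] by (simp add: mult_le_cancel_left_pos)
  qed
  have mixed: "is_mixed A i (s i (dominant_type n A i x c))"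
    and "unobs_payoff n A p \<mu> b s i (dominant_type n A i x c) \<delta>
      \<le> unobs_payoff n A p \<mu> b s i (dominant_type n A i x c) (s i (dominant_type n A i x c))"
    using eq supp i \<delta>(1) unfolding is_equilibrium_def by blast+
  then have "c * 1 \<le> c * s i (dominant_type n A i x c) x"
    using unobs_payoff_dominant_type[OF assms(1) supp] \<delta>(2) by simp
  then show "s i (dominant_type n A i x c) x = 1"
    using \<open>0 < c\<close> is_mixed_le_1[OF mixed fin[OF i], of x] by (simp add: mult_le_cancel_left_pos)
qed

end

section \<open>Stability against a single mutant\<close>

definition plays_pure ::
  "nat \<Rightarrow> (nat \<Rightarrow> 'a ptype \<Rightarrow> real) \<Rightarrow> ((nat \<Rightarrow> 'a ptype) \<Rightarrow> nat \<Rightarrow> 'a mixed)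
     \<Rightarrow> (nat \<Rightarrow> 'a ptype \<Rightarrow> 'a mixed) \<Rightarrow> (nat \<Rightarrow> 'a) \<Rightarrow> bool" where
  "plays_pure n \<mu> b s a \<longleftrightarrow>
     (\<forall>\<theta>\<in>tprofiles n \<mu>. \<forall>j<n. b \<theta> j (a j) = 1 \<and> s j (\<theta> j) (a j) = 1)"

lemma outcome_eq_1_imp_plays_pure:
  assumes fin: "\<And>j. j < n \<Longrightarrow> finite (A j)" and a: "a \<in> PiE {..<n} A"
    and pop: "is_popdist n A \<mu>" and eq: "is_equilibrium n A p \<mu> b s" and p: "0 < p" "p < 1"
    and outcome: "outcome n p \<mu> b s a = 1"
  shows "plays_pure n \<mu> b s a"
  unfolding plays_pure_def
proof (intro ballI allI impI)
  fix \<theta> j assume \<theta>: "\<theta> \<in> tprofiles n \<mu>" and "j < n"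
  define W where "W = (\<lambda>\<theta>. \<Prod>i<n. \<mu> i (\<theta> i))"
  define w where "w = (\<lambda>T::nat set. p ^ (n - card T) * (1 - p) ^ card T)"
  define Q where "Q = (\<lambda>\<theta> T. \<Prod>i<n. play b s \<theta> T i (a i))"
  define X where "X = (\<lambda>\<theta>. \<Sum>T\<in>Pow {..<n}. w T * Q \<theta> T)"
  have tdist: "\<And>j. j < n \<Longrightarrow> is_tdist n A (\<mu> j)" using pop by (simp add: is_popdist_def)
  have "finite (tprofiles n \<mu>)"
    using tdist by (auto simp: tprofiles_def is_tdist_def intro!: finite_PiE)
  have sum_W: "sum W (tprofiles n \<mu>) = 1"
    unfolding W_def tprofiles_def using tdist by (intro sum_PiE_prod_eq_1) (auto simp: is_tdist_def)
  have W_pos: "0 < W \<theta>'" if "\<theta>' \<in> tprofiles n \<mu>" for \<theta>'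
    unfolding W_def using that tdist
    by (intro prod_pos) (force simp: tprofiles_def PiE_iff is_tdist_def tsupp_def order.strict_iff_order)
  have sum_w: "sum w (Pow {..<n}) = 1"
    unfolding w_def using sum_binomial_weights[of "{..<n}" p] by simp
  have w_pos: "0 < w T" for T unfolding w_def using p by simp
  have play_bounds: "0 \<le> play b s \<theta>' T i (a i) \<and> play b s \<theta>' T i (a i) \<le> 1"
    if "\<theta>' \<in> tprofiles n \<mu>" "i < n" for \<theta>' T i
    using play_mixed[OF eq that] is_mixed_le_1[OF play_mixed[OF eq that] fin[OF \<open>i < n\<close>]]
    by (simp add: is_mixed_def)
  have Q_le_1: "Q \<theta>' T \<le> 1" if "\<theta>' \<in> tprofiles n \<mu>" for \<theta>' T
    unfolding Q_def using play_bounds[OF that] by (auto intro: prod_le_1)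
  have "X \<theta>' \<le> 1" if "\<theta>' \<in> tprofiles n \<mu>" for \<theta>'
    unfolding X_def using sum_w w_pos Q_le_1[OF that] by (intro weighted_sum_le) (auto simp: less_imp_le)
  moreover have "(\<Sum>\<theta>'\<in>tprofiles n \<mu>. W \<theta>' * X \<theta>') = 1"
    using outcome unfolding outcome_def W_def X_def w_def Q_def by simp
  ultimately have "X \<theta> = 1"
    using weighted_sum_eq_1_imp_eq_1[OF \<open>finite (tprofiles n \<mu>)\<close> _ _ sum_W] W_pos \<theta>
    by (simp add: less_imp_le)
  then have Q_eq_1: "Q \<theta> T = 1" if "T \<in> Pow {..<n}" for T
    using weighted_sum_eq_1_imp_eq_1[OF _ _ _ sum_w] w_pos Q_le_1[OF \<theta>] that
    by (simp add: X_def less_imp_le)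
  have "play b s \<theta> T j (a j) = 1" if "T \<in> Pow {..<n}" for T
    using prod_eq_1_imp_eq_1[of "{..<n}" "\<lambda>i. play b s \<theta> T i (a i)"] play_bounds[OF \<theta>]
      Q_eq_1[OF that] \<open>j < n\<close> by (simp add: Q_def)
  from this[of "{}"] this[of "{..<n}"] show "b \<theta> j (a j) = 1 \<and> s j (\<theta> j) (a j) = 1"
    using \<open>j < n\<close> by (simp add: play_def)
qed

lemma tsupp_post_entry_single:
  assumes "0 < e" "e < 1" "m \<notin> tsupp (\<mu> i)"
  shows "tsupp (post_entry \<mu> {i} (\<lambda>_. m) (\<lambda>_. e) i) = insert m (tsupp (\<mu> i))"
  using assms by (auto simp: post_entry_def tsupp_def)

lemma stable_mutant_not_fitter:
  assumes "stable n A \<pi> p \<mu> b s" "i < n" "m \<in> Theta n A" "m \<notin> tsupp (\<mu> i)" "0 < \<eta>"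
  obtains \<eta>' e b' s' where "0 \<le> \<eta>'" "\<eta>' < \<eta>" "0 < e" "e < 1"
    "(b', s') \<in> nearby n A p \<mu> (post_entry \<mu> {i} (\<lambda>_. m) (\<lambda>_. e)) \<eta>' b s"
    "\<And>t. t \<in> tsupp (\<mu> i) \<Longrightarrow>
       avg_fit n A \<pi> p (post_entry \<mu> {i} (\<lambda>_. m) (\<lambda>_. e)) b' s' i m
         \<le> avg_fit n A \<pi> p (post_entry \<mu> {i} (\<lambda>_. m) (\<lambda>_. e)) b' s' i t"
proof -
  obtain \<eta>' \<epsilon> where \<eta>': "0 \<le> \<eta>'" "\<eta>' < \<eta>" and "0 < \<epsilon>" "\<epsilon> < 1" and
    entry: "\<And>eps. (\<forall>j\<in>{i}. 0 < eps j \<and> eps j < 1) \<and> Max (eps ` {i}) < \<epsilon> \<Longrightarrow>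
      (let \<mu>' = post_entry \<mu> {i} (\<lambda>_. m) eps in
        nearby n A p \<mu> \<mu>' \<eta>' b s \<noteq> {} \<and>
        (\<forall>(b', s')\<in>nearby n A p \<mu> \<mu>' \<eta>' b s.
          (\<exists>j\<in>{i}. \<forall>tj\<in>tsupp (\<mu> j). avg_fit n A \<pi> p \<mu>' b' s' j tj > avg_fit n A \<pi> p \<mu>' b' s' j m) \<or>
          (\<forall>k<n. \<forall>t1\<in>tsupp (\<mu>' k). \<forall>t2\<in>tsupp (\<mu>' k).
             avg_fit n A \<pi> p \<mu>' b' s' k t1 = avg_fit n A \<pi> p \<mu>' b' s' k t2)))"
  proof -
    have "{i} \<subseteq> {..<n} \<and> {i} \<noteq> {} \<and> (\<forall>j\<in>{i}. (\<lambda>_. m) j \<in> Theta n A \<and> (\<lambda>_. m) j \<notin> tsupp (\<mu> j))"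
      using assms(2-4) by simp
    from assms(1)[unfolded stable_def, THEN conjunct2, rule_format, OF this assms(5)] that
    show thesis by blast
  qed
  define e where "e = \<epsilon> / 2"
  define \<mu>' where "\<mu>' = post_entry \<mu> {i} (\<lambda>_. m) (\<lambda>_. e)"
  have "0 < e" "e < 1" using \<open>0 < \<epsilon>\<close> \<open>\<epsilon> < 1\<close> by (simp_all add: e_def)
  have "(\<forall>j\<in>{i}. 0 < (\<lambda>_. e) j \<and> (\<lambda>_. e) j < 1) \<and> Max ((\<lambda>_. e) ` {i}) < \<epsilon>"
    using \<open>0 < e\<close> \<open>e < 1\<close> \<open>0 < \<epsilon>\<close> by (simp add: e_def)
  note after_entry = entry[OF this, unfolded Let_def, folded \<mu>'_def]
  obtain b' s' where bs': "(b', s') \<in> nearby n A p \<mu> \<mu>' \<eta>' b s"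
    using conjunct1[OF after_entry] by (metis ex_in_conv surj_pair)
  have "avg_fit n A \<pi> p \<mu>' b' s' i m \<le> avg_fit n A \<pi> p \<mu>' b' s' i t" if "t \<in> tsupp (\<mu> i)" for t
  proof -
    have "m \<in> tsupp (\<mu>' i)" "t \<in> tsupp (\<mu>' i)"
      using tsupp_post_entry_single[of e m \<mu> i] \<open>0 < e\<close> \<open>e < 1\<close> assms(4) that
      by (simp_all add: \<mu>'_def)
    from bspec[OF conjunct2[OF after_entry] bs']
    consider "\<forall>tj\<in>tsupp (\<mu> i). avg_fit n A \<pi> p \<mu>' b' s' i tj > avg_fit n A \<pi> p \<mu>' b' s' i m"
      | "\<forall>k<n. \<forall>t1\<in>tsupp (\<mu>' k). \<forall>t2\<in>tsupp (\<mu>' k).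
           avg_fit n A \<pi> p \<mu>' b' s' k t1 = avg_fit n A \<pi> p \<mu>' b' s' k t2"
      by (simp only: prod.case bex_simps(3,5) simp_thms) blast
    then show ?thesis
    proof cases
      case 1
      then show ?thesis using that by (simp add: less_imp_le)
    next
      case 2
      then have "avg_fit n A \<pi> p \<mu>' b' s' i m = avg_fit n A \<pi> p \<mu>' b' s' i t"
        using \<open>i < n\<close> \<open>m \<in> tsupp (\<mu>' i)\<close> \<open>t \<in> tsupp (\<mu>' i)\<close> by blast
      then show ?thesis by simp
    qed
  qed
  with \<eta>' \<open>0 < e\<close> \<open>e < 1\<close> bs' show ?thesis using that unfolding \<mu>'_def by blast
qed

lemma mdist_ge:
  assumes "finite (A j)" "y \<in> A j"
  shows "\<bar>\<sigma> y - \<tau> y\<bar> \<le> mdist A j \<sigma> \<tau>"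
  unfolding mdist_def using assms by (intro Max_ge) auto

lemma nearby_plays_near_pure:
  assumes "(b', s') \<in> nearby n A p \<mu> \<mu>' \<eta> b s" "plays_pure n \<mu> b s a"
    and fin: "\<And>j. j < n \<Longrightarrow> finite (A j)" and a: "a \<in> PiE {..<n} A"
  shows "\<forall>\<theta>\<in>tprofiles n \<mu>. \<forall>j<n. 1 - \<eta> \<le> b' \<theta> j (a j) \<and> 1 - \<eta> \<le> s' j (\<theta> j) (a j)"
proof (intro ballI allI impI)
  fix \<theta> j assume "\<theta> \<in> tprofiles n \<mu>" "j < n"
  then have "mdist A j (b' \<theta> j) (b \<theta> j) \<le> \<eta>" "mdist A j (s' j (\<theta> j)) (s j (\<theta> j)) \<le> \<eta>"
    and "b \<theta> j (a j) = 1" "s j (\<theta> j) (a j) = 1"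
    using assms(1,2) by (auto simp: nearby_def plays_pure_def)
  moreover have "a j \<in> A j" using a \<open>j < n\<close> by (auto simp: PiE_iff)
  ultimately show "1 - \<eta> \<le> b' \<theta> j (a j) \<and> 1 - \<eta> \<le> s' j (\<theta> j) (a j)"
    using mdist_ge[of A j, OF fin[OF \<open>j < n\<close>], of "a j" "b' \<theta> j" "b \<theta> j"]
      mdist_ge[of A j, OF fin[OF \<open>j < n\<close>], of "a j" "s' j (\<theta> j)" "s j (\<theta> j)"] by force
qed

lemma avg_fit_le:
  assumes "\<And>j. j < n \<Longrightarrow> j \<noteq> i \<Longrightarrow> is_tdist n A (\<mu> j)" "0 \<le> p" "p \<le> 1"
    and "\<And>\<theta>' T. \<theta>' \<in> PiE ({..<n} - {i}) (\<lambda>j. tsupp (\<mu> j)) \<Longrightarrow> T \<subseteq> {..<n} \<Longrightarrow>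
      mlin n A (\<pi> i) (play b s (\<theta>'(i := t)) T) \<le> U"
  shows "avg_fit n A \<pi> p \<mu> b s i t \<le> U"
  unfolding avg_fit_def
  using opponent_weights[OF assms(1)] sum_binomial_weights[of "{..<n}" p] assms(2-4)
  by (intro weighted_sum_le) auto

lemma avg_fit_ge:
  assumes "\<And>j. j < n \<Longrightarrow> j \<noteq> i \<Longrightarrow> is_tdist n A (\<mu> j)" "0 \<le> p" "p \<le> 1" "0 \<le> K"
    and "\<And>\<theta>' T. \<theta>' \<in> PiE ({..<n} - {i}) (\<lambda>j. tsupp (\<mu> j)) \<Longrightarrow> T \<subseteq> {..<n} \<Longrightarrow>
      L - K \<le> mlin n A (\<pi> i) (play b s (\<theta>'(i := t)) T)"
    and "\<And>\<theta>' T. \<theta>' \<in> PiE ({..<n} - {i}) (\<lambda>j. tsupp (\<mu> j)) \<Longrightarrow> {..<n} - {i} \<subseteq> T \<Longrightarrow>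
      T \<subseteq> {..<n} \<Longrightarrow> L \<le> mlin n A (\<pi> i) (play b s (\<theta>'(i := t)) T)"
  shows "L - K * (2 ^ n * p) \<le> avg_fit n A \<pi> p \<mu> b s i t"
  unfolding avg_fit_def
proof (rule weighted_sum_ge)
  show "0 \<le> (\<Prod>j\<in>{..<n} - {i}. \<mu> j (\<theta>' j))" for \<theta>'
    by (rule opponent_weights(2)[OF assms(1)])
  show "(\<Sum>\<theta>'\<in>PiE ({..<n} - {i}) (\<lambda>j. tsupp (\<mu> j)). \<Prod>j\<in>{..<n} - {i}. \<mu> j (\<theta>' j)) = 1"
    by (rule opponent_weights(1)[OF assms(1)])
next
  fix \<theta>' assume \<theta>': "\<theta>' \<in> PiE ({..<n} - {i}) (\<lambda>j. tsupp (\<mu> j))"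
  define w where "w = (\<lambda>T::nat set. p ^ (n - card T) * (1 - p) ^ card T)"
  define bad where "bad = (\<lambda>T. if \<not> {..<n} - {i} \<subseteq> T then 1 else 0 :: real)"
  have "(\<Sum>T\<in>Pow {..<n}. w T * bad T) \<le> 2 ^ n * p"
    unfolding w_def bad_def by (rule sum_binomial_weights_nonfull_le[OF assms(2,3)]) auto
  then have "L - K * (2 ^ n * p) \<le> L - K * (\<Sum>T\<in>Pow {..<n}. w T * bad T)"
    using assms(4) by (simp add: mult_left_mono)
  also have "\<dots> = (\<Sum>T\<in>Pow {..<n}. w T) * L - K * (\<Sum>T\<in>Pow {..<n}. w T * bad T)"
    using sum_binomial_weights[of "{..<n}" p] by (simp add: w_def)
  also have "\<dots> = (\<Sum>T\<in>Pow {..<n}. w T * (L - K * bad T))"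
    by (simp add: right_diff_distrib sum_subtractf sum_distrib_left sum_distrib_right mult.left_commute)
  also have "\<dots> \<le> (\<Sum>T\<in>Pow {..<n}. w T * mlin n A (\<pi> i) (play b s (\<theta>'(i := t)) T))"
    using assms(2,3) assms(5,6)[OF \<theta>'] by (intro sum_mono mult_left_mono) (auto simp: w_def bad_def)
  finally show "L - K * (2 ^ n * p) \<le> (\<Sum>T\<in>Pow {..<n}. p ^ (n - card T) * (1 - p) ^ card T
      * mlin n A (\<pi> i) (play b s (\<theta>'(i := t)) T))"
    by (simp add: w_def)
qed

context
  fixes n :: nat and A :: "nat \<Rightarrow> 'a set" and \<pi> :: "nat \<Rightarrow> (nat \<Rightarrow> 'a) \<Rightarrow> real"
    and i :: nat and a :: "nat \<Rightarrow> 'a" and M p \<eta> :: real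
    and \<mu> \<mu>' :: "nat \<Rightarrow> 'a ptype \<Rightarrow> real" and b' s'
  assumes fin: "\<And>j. j < n \<Longrightarrow> finite (A j)" and a: "a \<in> PiE {..<n} A" and i: "i < n"
    and bound: "\<And>a'. a' \<in> PiE {..<n} A \<Longrightarrow> \<bar>\<pi> i a'\<bar> \<le> M"
    and p: "0 \<le> p" "p \<le> 1" and "0 \<le> \<eta>"
    and pop: "is_popdist n A \<mu>" and opponents: "\<And>j. j \<noteq> i \<Longrightarrow> \<mu>' j = \<mu> j"
    and supp: "tsupp (\<mu> i) \<subseteq> tsupp (\<mu>' i)"
    and eq: "is_equilibrium n A p \<mu>' b' s'"
    and near: "\<forall>\<theta>\<in>tprofiles n \<mu>. \<forall>j<n. 1 - \<eta> \<le> b' \<theta> j (a j) \<and> 1 - \<eta> \<le> s' j (\<theta> j) (a j)"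
begin

lemma incumbent_fitness_le:
  assumes "t \<in> tsupp (\<mu> i)"
  shows "avg_fit n A \<pi> p \<mu>' b' s' i t \<le> \<pi> i a + 2 * M * (real n * \<eta>)"
proof (rule avg_fit_le[OF _ p])
  show "is_tdist n A (\<mu>' j)" if "j < n" "j \<noteq> i" for j
    using pop that opponents by (simp add: is_popdist_def)
  fix \<theta>' T assume \<theta>': "\<theta>' \<in> PiE ({..<n} - {i}) (\<lambda>j. tsupp (\<mu>' j))"
  moreover have "PiE ({..<n} - {i}) (\<lambda>j. tsupp (\<mu>' j)) = PiE ({..<n} - {i}) (\<lambda>j. tsupp (\<mu> j))"
    by (rule PiE_cong) (simp add: opponents)
  ultimately have \<theta>: "\<theta>'(i := t) \<in> tprofiles n \<mu>"
    by (intro fun_upd_in_tprofiles i assms) simp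
  moreover have "tprofiles n \<mu> \<subseteq> tprofiles n \<mu>'"
    unfolding tprofiles_def using supp opponents by (intro PiE_mono) (metis order_refl)
  ultimately have "\<theta>'(i := t) \<in> tprofiles n \<mu>'" by blast
  moreover have "1 - \<eta> \<le> play b' s' (\<theta>'(i := t)) T j (a j)" if "j < n" for j
    using near[rule_format, OF \<theta> that] by (simp add: play_def del: fun_upd_apply)
  ultimately have "\<bar>mlin n A (\<pi> i) (play b' s' (\<theta>'(i := t)) T) - \<pi> i a\<bar> \<le> 2 * M * (real n * \<eta>)"
    using play_mixed[OF eq] by (intro mlin_near_pure[OF fin _ a bound])
  then show "mlin n A (\<pi> i) (play b' s' (\<theta>'(i := t)) T) \<le> \<pi> i a + 2 * M * (real n * \<eta>)"
    by simp
qed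

lemma mutant_fitness_ge:
  assumes x: "x \<in> A i" and "0 < c" and supp_m: "dominant_type n A i x c \<in> tsupp (\<mu>' i)"
  shows "\<pi> i (a(i := x)) - 2 * M * (real n * \<eta>) - 2 * M * (2 ^ n * p)
    \<le> avg_fit n A \<pi> p \<mu>' b' s' i (dominant_type n A i x c)"
proof -
  define m where "m = dominant_type n A i x c"
  have ax: "a(i := x) \<in> PiE {..<n} A" using a i x by (auto simp: PiE_iff extensional_def)
  have "0 \<le> M" using bound[OF a] by simp
  have tdist: "is_tdist n A (\<mu>' j)" if "j < n" "j \<noteq> i" for j
    using pop that opponents by (simp add: is_popdist_def)
  note plays_x = equilibrium_dominant_type_plays_x[OF fin eq i x tdist supp_m \<open>0 < c\<close>, folded m_def]
  obtain t0 where t0: "t0 \<in> tsupp (\<mu> i)"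
    using tsupp_nonempty[OF pop i] by blast
  have opponent_profiles: "PiE ({..<n} - {i}) (\<lambda>j. tsupp (\<mu>' j)) = PiE ({..<n} - {i}) (\<lambda>j. tsupp (\<mu> j))"
    by (rule PiE_cong) (simp add: opponents)
  show ?thesis
    unfolding m_def[symmetric]
  proof (rule avg_fit_ge[OF tdist p])
    show "0 \<le> 2 * M" using \<open>0 \<le> M\<close> by simp
  next
    fix \<theta>' T assume "\<theta>' \<in> PiE ({..<n} - {i}) (\<lambda>j. tsupp (\<mu>' j))"
    then have \<theta>m: "\<theta>'(i := m) \<in> tprofiles n \<mu>'"
      using supp_m by (intro fun_upd_in_tprofiles i) (simp_all add: m_def)
    have "\<bar>mlin n A (\<pi> i) (play b' s' (\<theta>'(i := m)) T)\<bar> \<le> M"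
      using play_mixed[OF eq \<theta>m] by (intro mlin_abs_le[OF fin _ bound])
    moreover have "\<pi> i (a(i := x)) \<le> M" using bound[OF ax] by simp
    moreover have "0 \<le> 2 * M * (real n * \<eta>)" using \<open>0 \<le> M\<close> \<open>0 \<le> \<eta>\<close> by simp
    ultimately show "\<pi> i (a(i := x)) - 2 * M * (real n * \<eta>) - 2 * M
        \<le> mlin n A (\<pi> i) (play b' s' (\<theta>'(i := m)) T)"
      by linarith
  next
    fix \<theta>' T assume \<theta>': "\<theta>' \<in> PiE ({..<n} - {i}) (\<lambda>j. tsupp (\<mu>' j))"
      and "{..<n} - {i} \<subseteq> T"
    then have \<theta>m: "\<theta>'(i := m) \<in> tprofiles n \<mu>'"
      using supp_m by (intro fun_upd_in_tprofiles i) (simp_all add: m_def)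
    have \<theta>0: "\<theta>'(i := t0) \<in> tprofiles n \<mu>"
      using \<theta>' t0 by (intro fun_upd_in_tprofiles i) (simp_all add: opponent_profiles)
    have "1 - \<eta> \<le> play b' s' (\<theta>'(i := m)) T j ((a(i := x)) j)" if "j < n" for j
    proof (cases "j = i")
      case True
      then show ?thesis using plays_x \<theta>m \<open>0 \<le> \<eta>\<close> by (simp add: play_def)
    next
      case False
      then have "j \<in> T" using \<open>{..<n} - {i} \<subseteq> T\<close> that by auto
      then show ?thesis
        using near[rule_format, OF \<theta>0 that] False by (simp add: play_def)
    qed
    then have "\<bar>mlin n A (\<pi> i) (play b' s' (\<theta>'(i := m)) T) - \<pi> i (a(i := x))\<bar> \<le> 2 * M * (real n * \<eta>)"
      using play_mixed[OF eq \<theta>m] by (intro mlin_near_pure[OF fin _ ax bound])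
    then show "\<pi> i (a(i := x)) - 2 * M * (real n * \<eta>) \<le> mlin n A (\<pi> i) (play b' s' (\<theta>'(i := m)) T)"
      by simp
  qed
qed

end

lemma stable_plays_pure_gain_le:
  assumes fin: "\<And>j. j < n \<Longrightarrow> finite (A j)" and a: "a \<in> PiE {..<n} A"
    and i: "i < n" and x: "x \<in> A i"
    and bound: "\<And>a'. a' \<in> PiE {..<n} A \<Longrightarrow> \<bar>\<pi> i a'\<bar> \<le> M"
    and p: "0 \<le> p" "p \<le> 1" and pop: "is_popdist n A \<mu>" and stable: "stable n A \<pi> p \<mu> b s"
    and pure: "plays_pure n \<mu> b s a" and "0 < \<eta>"
  shows "\<pi> i (a(i := x)) - \<pi> i a \<le> 4 * M * (real n * \<eta>) + 2 * M * (2 ^ n * p)"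
proof -
  have "finite (tsupp (\<mu> i))" using pop i by (simp add: is_popdist_def is_tdist_def)
  then obtain c where "0 < c" and fresh: "dominant_type n A i x c \<notin> tsupp (\<mu> i)"
    by (rule ex_fresh_dominant_type[OF _ a i x])
  define m where "m = dominant_type n A i x c"
  obtain \<eta>' e b' s' where "0 \<le> \<eta>'" "\<eta>' < \<eta>" "0 < e" "e < 1"
    and bs': "(b', s') \<in> nearby n A p \<mu> (post_entry \<mu> {i} (\<lambda>_. m) (\<lambda>_. e)) \<eta>' b s"
    and not_fitter: "\<And>t. t \<in> tsupp (\<mu> i) \<Longrightarrow>
       avg_fit n A \<pi> p (post_entry \<mu> {i} (\<lambda>_. m) (\<lambda>_. e)) b' s' i m
         \<le> avg_fit n A \<pi> p (post_entry \<mu> {i} (\<lambda>_. m) (\<lambda>_. e)) b' s' i t"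
    using stable_mutant_not_fitter[OF stable i dominant_type_in_Theta fresh \<open>0 < \<eta>\<close>, folded m_def]
    by blast
  define \<mu>' where "\<mu>' = post_entry \<mu> {i} (\<lambda>_. m) (\<lambda>_. e)"
  have supp': "tsupp (\<mu>' i) = insert m (tsupp (\<mu> i))"
    unfolding \<mu>'_def m_def using \<open>0 < e\<close> \<open>e < 1\<close> fresh by (rule tsupp_post_entry_single)
  have opponents: "\<And>j. j \<noteq> i \<Longrightarrow> \<mu>' j = \<mu> j" by (simp add: \<mu>'_def post_entry_def)
  have eq': "is_equilibrium n A p \<mu>' b' s'" using bs' unfolding nearby_def \<mu>'_def by blast
  have supp: "tsupp (\<mu> i) \<subseteq> tsupp (\<mu>' i)" "m \<in> tsupp (\<mu>' i)" using supp' by auto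
  have near: "\<forall>\<theta>\<in>tprofiles n \<mu>. \<forall>j<n. 1 - \<eta>' \<le> b' \<theta> j (a j) \<and> 1 - \<eta>' \<le> s' j (\<theta> j) (a j)"
    using bs' pure fin a unfolding \<mu>'_def by (rule nearby_plays_near_pure)
  obtain t0 where t0: "t0 \<in> tsupp (\<mu> i)"
    using tsupp_nonempty[OF pop i] by blast
  have "\<pi> i (a(i := x)) - 2 * M * (real n * \<eta>') - 2 * M * (2 ^ n * p) \<le> avg_fit n A \<pi> p \<mu>' b' s' i m"
    using fin a i bound p \<open>0 \<le> \<eta>'\<close> pop opponents supp(1) eq' near x \<open>0 < c\<close> supp(2)
    unfolding m_def by (rule mutant_fitness_ge)
  also have "\<dots> \<le> avg_fit n A \<pi> p \<mu>' b' s' i t0"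
    using not_fitter[OF t0] by (simp add: \<mu>'_def)
  also have "\<dots> \<le> \<pi> i a + 2 * M * (real n * \<eta>')"
    using fin a i bound p \<open>0 \<le> \<eta>'\<close> pop opponents supp(1) eq' near t0 by (rule incumbent_fitness_le)
  finally have "\<pi> i (a(i := x)) - \<pi> i a \<le> 4 * M * (real n * \<eta>') + 2 * M * (2 ^ n * p)"
    by linarith
  moreover have "4 * M * (real n * \<eta>') \<le> 4 * M * (real n * \<eta>)"
    using bound[OF a] \<open>\<eta>' < \<eta>\<close> by (intro mult_left_mono) auto
  ultimately show ?thesis by linarith
qed

lemma stable_profile_gain_le:
  assumes fin: "\<And>j. j < n \<Longrightarrow> finite (A j)" and a: "a \<in> PiE {..<n} A"
    and i: "i < n" and x: "x \<in> A i"
    and bound: "\<And>a'. a' \<in> PiE {..<n} A \<Longrightarrow> \<bar>\<pi> i a'\<bar> \<le> M"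
    and p: "0 < p" "p < 1" and "stable_profile n A \<pi> p a"
  shows "\<pi> i (a(i := x)) - \<pi> i a \<le> 2 * M * 2 ^ n * p"
proof -
  obtain \<mu> b s where pop: "is_popdist n A \<mu>" and eq: "is_equilibrium n A p \<mu> b s"
    and stable: "stable n A \<pi> p \<mu> b s"
    and point_mass: "\<forall>a'\<in>PiE {..<n} A. outcome n p \<mu> b s a' = (if a' = a then 1 else 0)"
    using assms(8) unfolding stable_profile_def by blast
  have "outcome n p \<mu> b s a = 1" using point_mass a by auto
  with fin a pop eq p have pure: "plays_pure n \<mu> b s a" by (rule outcome_eq_1_imp_plays_pure)
  show ?thesis
  proof (rule le_if_le_plus_small_multiple)
    show "0 \<le> 4 * M * real n" using bound[OF a] by simp
    fix \<delta> :: real assume "0 < \<delta>"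
    then have "0 < \<delta> / 2" by simp
    with fin a i x bound less_imp_le[OF p(1)] less_imp_le[OF p(2)] pop stable pure
    have "\<pi> i (a(i := x)) - \<pi> i a \<le> 4 * M * (real n * (\<delta> / 2)) + 2 * M * (2 ^ n * p)"
      by (rule stable_plays_pure_gain_le)
    then show "\<exists>t. 0 < t \<and> t < \<delta> \<and> \<pi> i (a(i := x)) - \<pi> i a \<le> 2 * M * 2 ^ n * p + 4 * M * real n * t"
      using \<open>0 < \<delta>\<close> by (intro exI[of _ "\<delta> / 2"]) (simp add: mult.assoc)
  qed
qed

theorem mainTheorem15:
  fixes n :: nat and A :: "nat \<Rightarrow> 'a set" and \<pi> :: "nat \<Rightarrow> (nat \<Rightarrow> 'a) \<Rightarrow> real"
    and a :: "nat \<Rightarrow> 'a"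
  assumes "\<forall>i<n. finite (A i) \<and> A i \<noteq> {}"
    and "a \<in> PiE {..<n} A"
    and "\<forall>pbar. 0 < pbar \<and> pbar < 1 \<longrightarrow> (\<exists>p. 0 < p \<and> p < pbar \<and> stable_profile n A \<pi> p a)"
  shows "nash n A \<pi> a"
  unfolding nash_def
proof (intro conjI assms(2) allI impI ballI)
  fix i x assume i: "i < n" and x: "x \<in> A i"
  have fin: "\<And>j. j < n \<Longrightarrow> finite (A j)" using assms(1) by blast
  define M where "M = (\<Sum>a'\<in>PiE {..<n} A. \<bar>\<pi> i a'\<bar>)"
  have bound: "\<bar>\<pi> i a'\<bar> \<le> M" if "a' \<in> PiE {..<n} A" for a'
    unfolding M_def using fin that by (intro member_le_sum finite_PiE) auto
  have "\<pi> i (a(i := x)) - \<pi> i a \<le> 0"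
  proof (rule le_if_le_plus_small_multiple)
    show "0 \<le> 2 * M * 2 ^ n" using bound[OF assms(2)] by simp
    fix \<delta> :: real assume "0 < \<delta>"
    then have "0 < min \<delta> (1/2)" "min \<delta> (1/2) < 1" by auto
    then obtain p where p: "0 < p" "p < min \<delta> (1/2)" "stable_profile n A \<pi> p a"
      using assms(3) by blast
    have "p < 1" using p(2) by simp
    with fin assms(2) i x bound \<open>0 < p\<close> have "\<pi> i (a(i := x)) - \<pi> i a \<le> 2 * M * 2 ^ n * p"
      using p(3) by (rule stable_profile_gain_le)
    then show "\<exists>t. 0 < t \<and> t < \<delta> \<and> \<pi> i (a(i := x)) - \<pi> i a \<le> 0 + 2 * M * 2 ^ n * t"
      using p by (intro exI[of _ p]) simp
  qed
  then show "\<pi> i (a(i := x)) \<le> \<pi> i a" by simp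
qed

end
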